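(* Let $f\in\mathcal{F}_k$ and let $\bar p$ be the uniform distribution on $\mathcal{Y}$. For all $v\in\mathcal{V}$, $\ell_{\text{abs}}^f(v;\bar p)\ge f([k])$. For all $r\in\mathcal{Y}$, $\ell_{\text{abs}}^f(r;\bar p)=2\bar f$, where $\bar f=2^{-k}\sum_{S\subseteq[k]}f(S)$.
   Context: $[k]=\{1,\dots,k\}$, $\mathcal{Y}=\{-1,1\}^k$, $\mathcal{V}=\{-1,0,1\}^k$. $\mathcal{F}_k$: set functions $f:2^{[k]}\to\mathbb{R}$ that are submodular ($f(S)+f(T)\ge f(S\cup T)+f(S\cap T)$), increasing and normalized ($f(\emptyset)=0$). $\ell_{\text{abs}}^f(v,y)=f(\{i:v_iy_i<0\})+f(\{i:v_iy_i\le0\})$ for $v\in\mathcal{V},y\in\mathcal{Y}$, and $\ell_{\text{abs}}^f(v;p)=\sum_yp_y\ell_{\text{abs}}^f(v,y)$. *)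

theory Defs
  imports Complex_Main "HOL-Library.FuncSet"
begin

definition Ycube :: "nat \<Rightarrow> (nat \<Rightarrow> int) set" where
  "Ycube k = PiE {1..k} (\<lambda>_. {-1, 1})"

definition Vcube :: "nat \<Rightarrow> (nat \<Rightarrow> int) set" where
  "Vcube k = PiE {1..k} (\<lambda>_. {-1, 0, 1})"

definition submodular_on :: "nat \<Rightarrow> (nat set \<Rightarrow> real) \<Rightarrow> bool" where
  "submodular_on k f \<longleftrightarrow> (\<forall>S T. S \<subseteq> {1..k} \<longrightarrow> T \<subseteq> {1..k} \<longrightarrow>
      f S + f T \<ge> f (S \<union> T) + f (S \<inter> T))"

definition increasing_on :: "nat \<Rightarrow> (nat set \<Rightarrow> real) \<Rightarrow> bool" where
  "increasing_on k f \<longleftrightarrow> (\<forall>S T. S \<subseteq> T \<longrightarrow> T \<subseteq> {1..k} \<longrightarrow> f S \<le> f T)"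

definition Fk :: "nat \<Rightarrow> (nat set \<Rightarrow> real) set" where
  "Fk k = {f. submodular_on k f \<and> increasing_on k f \<and> f {} = 0}"

definition loss_abs :: "nat \<Rightarrow> (nat set \<Rightarrow> real) \<Rightarrow> (nat \<Rightarrow> int) \<Rightarrow> (nat \<Rightarrow> int) \<Rightarrow> real" where
  "loss_abs k f v y = f {i \<in> {1..k}. v i * y i < 0} + f {i \<in> {1..k}. v i * y i \<le> 0}"

definition loss_abs_p :: "nat \<Rightarrow> (nat set \<Rightarrow> real) \<Rightarrow> (nat \<Rightarrow> int) \<Rightarrow> ((nat \<Rightarrow> int) \<Rightarrow> real) \<Rightarrow> real" where
  "loss_abs_p k f v p = (\<Sum>y\<in>Ycube k. p y * loss_abs k f v y)"

definition uniform_Y :: "nat \<Rightarrow> (nat \<Rightarrow> int) \<Rightarrow> real" where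
  "uniform_Y k y = 1 / 2 ^ k"

definition fbar :: "nat \<Rightarrow> (nat set \<Rightarrow> real) \<Rightarrow> real" where
  "fbar k f = (1 / 2 ^ k) * (\<Sum>S\<in>Pow {1..k}. f S)"

end

theory Submission
  imports Defs
begin

text \<open>Pair each sign vector \<open>y\<close> with \<open>-y\<close>: the positions where \<open>v\<close> strictly disagrees
  with \<open>y\<close> and those where \<open>v\<close> weakly disagrees with \<open>-y\<close> partition \<open>[k]\<close>, so submodularity and
  \<open>f {} = 0\<close> give \<open>loss(y) + loss(-y) \<ge> 2 f([k])\<close>; averaging over \<open>y\<close> yields the lower bound.
  For a sign vector \<open>r\<close> both sets in the loss equal the set where \<open>y\<close> differs from \<open>r\<close>,
  and \<open>y \<mapsto> {i. y i \<noteq> r i}\<close> is a bijection from \<open>{-1,1}\<^sup>k\<close> onto the subsets of \<open>[k]\<close>.\<close>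

lemma card_Ycube: "card (Ycube k) = 2 ^ k"
  unfolding Ycube_def by (simp add: card_PiE numeral_2_eq_2)

lemma Ycube_memD: "y \<in> Ycube k \<Longrightarrow> i \<in> {1..k} \<Longrightarrow> y i = -1 \<or> y i = 1"
  unfolding Ycube_def by (auto simp: PiE_iff)

lemma bij_betw_uminus_Ycube: "bij_betw (\<lambda>y. \<lambda>i\<in>{1..k}. - y i) (Ycube k) (Ycube k)"
  by (rule bij_betw_byWitness[where f' = "\<lambda>y. \<lambda>i\<in>{1..k}. - y i"])
     (auto simp: Ycube_def PiE_iff extensional_def)

lemma submodular_on_complement:
  assumes "submodular_on k f" "f {} = 0" "A \<subseteq> {1..k}"
  shows "f {1..k} \<le> f A + f ({1..k} - A)"
proof -
  have "f (A \<union> ({1..k} - A)) + f (A \<inter> ({1..k} - A)) \<le> f A + f ({1..k} - A)"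
    using assms(1,3) unfolding submodular_on_def by blast
  moreover have "A \<union> ({1..k} - A) = {1..k}" "A \<inter> ({1..k} - A) = {}"
    using assms(3) by auto
  ultimately show ?thesis using assms(2) by simp
qed

lemma loss_abs_p_uniform_Y:
  "loss_abs_p k f v (uniform_Y k) = (\<Sum>y\<in>Ycube k. loss_abs k f v y) / 2 ^ k"
  unfolding loss_abs_p_def uniform_Y_def by (simp add: sum_divide_distrib)

lemma loss_abs_antipodal_ge:
  assumes "submodular_on k f" "f {} = 0"
  shows "2 * f {1..k} \<le> loss_abs k f v y + loss_abs k f v (\<lambda>i\<in>{1..k}. - y i)"
proof -
  define strict where "strict y = {i \<in> {1..k}. v i * y i < 0}" for y :: "nat \<Rightarrow> int"
  define weak where "weak y = {i \<in> {1..k}. v i * y i \<le> 0}" for y :: "nat \<Rightarrow> int"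
  define y' where "y' = (\<lambda>i\<in>{1..k}. - y i)"
  have "weak y' = {1..k} - strict y" "weak y = {1..k} - strict y'"
    unfolding weak_def strict_def y'_def by auto
  moreover have "strict y \<subseteq> {1..k}" "strict y' \<subseteq> {1..k}"
    unfolding strict_def by auto
  ultimately have "f {1..k} \<le> f (strict y) + f (weak y')" "f {1..k} \<le> f (strict y') + f (weak y)"
    using submodular_on_complement[OF assms] by metis+
  then show ?thesis
    unfolding loss_abs_def strict_def weak_def y'_def by simp
qed

lemma loss_abs_p_uniform_Y_ge:
  assumes "submodular_on k f" "f {} = 0"
  shows "f {1..k} \<le> loss_abs_p k f v (uniform_Y k)"
proof -
  let ?L = "\<lambda>y. loss_abs k f v y"
  have "(\<Sum>y\<in>Ycube k. ?L y) = (\<Sum>y\<in>Ycube k. ?L (\<lambda>i\<in>{1..k}. - y i))"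
    using sum.reindex_bij_betw[OF bij_betw_uminus_Ycube] by metis
  then have "2 * (\<Sum>y\<in>Ycube k. ?L y) = (\<Sum>y\<in>Ycube k. ?L y + ?L (\<lambda>i\<in>{1..k}. - y i))"
    by (simp add: sum.distrib)
  also have "\<dots> \<ge> (\<Sum>y\<in>Ycube k. 2 * f {1..k})"
    by (intro sum_mono loss_abs_antipodal_ge[OF assms])
  finally have "2 ^ k * f {1..k} \<le> (\<Sum>y\<in>Ycube k. ?L y)"
    by (simp add: card_Ycube)
  then show ?thesis
    by (simp add: loss_abs_p_uniform_Y field_simps)
qed

lemma loss_abs_Ycube:
  assumes "r \<in> Ycube k" "y \<in> Ycube k"
  shows "loss_abs k f r y = 2 * f {i \<in> {1..k}. y i \<noteq> r i}"
proof -
  have "{i \<in> {1..k}. r i * y i < 0} = {i \<in> {1..k}. y i \<noteq> r i}"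
       "{i \<in> {1..k}. r i * y i \<le> 0} = {i \<in> {1..k}. y i \<noteq> r i}"
    using Ycube_memD[OF assms(1)] Ycube_memD[OF assms(2)] by fastforce+
  then show ?thesis unfolding loss_abs_def by simp
qed

lemma bij_betw_disagreement_set:
  assumes "r \<in> Ycube k"
  shows "bij_betw (\<lambda>y. {i \<in> {1..k}. y i \<noteq> r i}) (Ycube k) (Pow {1..k})"
proof (rule bij_betw_byWitness[where f' = "\<lambda>S. \<lambda>i\<in>{1..k}. if i \<in> S then - r i else r i"])
  show "\<forall>y\<in>Ycube k. (\<lambda>i\<in>{1..k}. if i \<in> {i \<in> {1..k}. y i \<noteq> r i} then - r i else r i) = y"
    using Ycube_memD[OF assms] by (force simp: Ycube_def PiE_iff extensional_def)
  show "\<forall>S\<in>Pow {1..k}. {i \<in> {1..k}. (\<lambda>i\<in>{1..k}. if i \<in> S then - r i else r i) i \<noteq> r i} = S"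
    using Ycube_memD[OF assms] by force
  show "(\<lambda>S. \<lambda>i\<in>{1..k}. if i \<in> S then - r i else r i) ` Pow {1..k} \<subseteq> Ycube k"
    using Ycube_memD[OF assms] by (fastforce simp: Ycube_def PiE_iff)
qed auto

lemma loss_abs_p_uniform_Y_Ycube:
  assumes "r \<in> Ycube k"
  shows "loss_abs_p k f r (uniform_Y k) = 2 * fbar k f"
proof -
  have "(\<Sum>y\<in>Ycube k. loss_abs k f r y) = (\<Sum>y\<in>Ycube k. 2 * f {i \<in> {1..k}. y i \<noteq> r i})"
    using loss_abs_Ycube[OF assms] by simp
  also have "\<dots> = (\<Sum>S\<in>Pow {1..k}. 2 * f S)"
    using sum.reindex_bij_betw[OF bij_betw_disagreement_set[OF assms], of "\<lambda>S. 2 * f S"] .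
  also have "\<dots> = 2 * (\<Sum>S\<in>Pow {1..k}. f S)"
    by (simp add: sum_distrib_left)
  finally show ?thesis
    by (simp add: loss_abs_p_uniform_Y fbar_def)
qed

theorem lemma5:
  fixes k :: nat and f :: "nat set \<Rightarrow> real"
  assumes "f \<in> Fk k"
  shows "(\<forall>v\<in>Vcube k. loss_abs_p k f v (uniform_Y k) \<ge> f {1..k})
       \<and> (\<forall>r\<in>Ycube k. loss_abs_p k f r (uniform_Y k) = 2 * fbar k f)"
  using assms loss_abs_p_uniform_Y_ge loss_abs_p_uniform_Y_Ycube by (simp add: Fk_def)

end
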